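(* Let $n\in\mathbf{N}$ and $A\subset[n]$ have property P. Define $$B_2=3\cdot\big(A\cap(\tfrac n9,\tfrac n6]\big)\ \cup\ 2\cdot\big(A\cap(\tfrac n6,\tfrac n4]\big)\ \cup\ \tfrac32\cdot\big(A\cap2\mathbf{Z}\cap(\tfrac n4,\tfrac n3]\big)\ \cup\ \big(A\cap(1+2\mathbf{Z})\cap(\tfrac n4,\tfrac n3]\big)\ \cup\ \big(A\cap(\tfrac n3,\tfrac n2]\big)\subset\left(\tfrac n4,\tfrac n2\right],$$ and $B_2^{\mathrm R}=B_2\cap(\frac n3,\frac n2]$. Writing $A_{(\frac23,1]}=A\cap(\frac{2n}{3},n]$, at least one of the following holds: $$2|B_2^{\mathrm R}|+|A_{(\frac23,1]}|\leqslant\frac n3+4,\qquad\text{or}\qquad |B_2|+|A_{(\frac23,1]}|\leqslant\frac n4+4.$$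
   Context: A set $A\subset\mathbf{N}$ has property P if there are no $x,y,z\in A$ (not necessarily distinct $x,y$) with $z<x$, $z<y$ and $z\mid x+y$. Intervals denote sets of integers; $q\cdot X=\{qx:x\in X\}$. *)

theory Defs
  imports Complex_Main
begin

definition propP :: "nat set \<Rightarrow> bool" where
  "propP A \<longleftrightarrow> (\<forall>x\<in>A. \<forall>y\<in>A. \<forall>z\<in>A. \<not> (z < x \<and> z < y \<and> z dvd x + y))"

definition slice :: "nat set \<Rightarrow> nat \<Rightarrow> real \<Rightarrow> real \<Rightarrow> nat set" where
  "slice A n a b = {x \<in> A. a * real n < real x \<and> real x \<le> b * real n}"

definition B2 :: "nat set \<Rightarrow> nat \<Rightarrow> nat set" where
  "B2 A n =
     (\<lambda>x. 3 * x) ` slice A n (1/9) (1/6)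
   \<union> (\<lambda>x. 2 * x) ` slice A n (1/6) (1/4)
   \<union> (\<lambda>x. 3 * (x div 2)) ` {x \<in> slice A n (1/4) (1/3). even x}
   \<union> {x \<in> slice A n (1/4) (1/3). odd x}
   \<union> slice A n (1/3) (1/2)"

definition B2R :: "nat set \<Rightarrow> nat \<Rightarrow> nat set" where
  "B2R A n = {b \<in> B2 A n. real n / 3 < real b \<and> real b \<le> real n / 2}"

end

theory Submission
  imports Defs
begin

text \<open>Let C = A \<inter> (2n/3, n]. Every b \<in> B2 has a witness a \<in> A with a \<le> b and a | 2b, so property P
forbids c + c' = 4b for c, c' \<in> C and b \<in> B2R; likewise it forbids c + c' = 6z for z \<in> A \<inter> (n/4, n/3].
Hence the numbers 2b (b \<in> B2R) and (c + c')/2 for the sums c + c' \<equiv> 0 (mod 4) are distinct even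
numbers in (2n/3, n], of which there are about n/6. Taking c = c' even bounds |B2R| plus the even part
of C. If the odd elements of C contain nonempty sets P \<equiv> 1 and Q \<equiv> 3 (mod 4), the sumset P + Q has
at least |P| + |Q| - 1 elements, which gives the first bound. Otherwise all odd elements of C lie in
one class e mod 4; every odd z \<in> B2 - B2R can be moved to one of 3z, 3z \<plusminus> 2 lying in class e and
outside C (since 3z \<notin> C and 3z - 2, 3z + 2 are not both in C), and together with the odd elements of
C these are about n/12 numbers of class e near (2n/3, n], which gives the second bound.\<close>

definition residue_window :: "real \<Rightarrow> real \<Rightarrow> nat \<Rightarrow> nat \<Rightarrow> nat set" where
  "residue_window lo hi q e = {x. lo < real x \<and> real x \<le> hi \<and> x mod q = e}"

lemma finite_real_bounded_nat: "finite {x::nat. real x \<le> c}"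
proof (rule finite_subset)
  show "{x::nat. real x \<le> c} \<subseteq> {..nat \<lceil>c\<rceil>}"
  proof
    fix x assume "x \<in> {x::nat. real x \<le> c}"
    then have "real x \<le> real (nat \<lceil>c\<rceil>)" by simp linarith
    then show "x \<in> {..nat \<lceil>c\<rceil>}" by (simp del: of_nat_nat)
  qed
qed simp

lemma finite_residue_window: "finite (residue_window lo hi q e)"
  unfolding residue_window_def by (rule finite_subset[OF _ finite_real_bounded_nat]) auto

lemma card_residue_window_le:
  assumes "0 < q" and "lo \<le> hi"
  shows "real (card (residue_window lo hi q e)) \<le> (hi - lo) / q + 1"
proof (cases "residue_window lo hi q e = {}")
  case True
  then show ?thesis using assms by simp
next
  case False
  define S where "S = residue_window lo hi q e"
  have fin: "finite S" unfolding S_def by (rule finite_residue_window)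
  define a where "a = Min S"
  define b where "b = Max S"
  have "a \<in> S" "b \<in> S" "a \<le> b" using fin False by (simp_all add: a_def b_def S_def)
  then have ea: "a = q * (a div q) + e" and eb: "b = q * (b div q) + e"
    using mult_div_mod_eq[of q a] mult_div_mod_eq[of q b] by (simp_all add: S_def residue_window_def)
  have "inj_on (\<lambda>x. x div q) S"
  proof (rule inj_onI)
    fix x y assume "x \<in> S" "y \<in> S" "x div q = y div q"
    then show "x = y" using mult_div_mod_eq[of q x] mult_div_mod_eq[of q y]
      by (simp add: S_def residue_window_def)
  qed
  then have "card S = card ((\<lambda>x. x div q) ` S)" by (simp add: card_image)
  also have "\<dots> \<le> card {a div q .. b div q}"
    using fin by (intro card_mono) (auto simp: a_def b_def intro!: div_le_mono)
  finally have "card S \<le> Suc (b div q) - a div q" by simp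
  moreover have "a div q \<le> b div q" using \<open>a \<le> b\<close> by (rule div_le_mono)
  ultimately have card: "real (card S) \<le> real (b div q) - real (a div q) + 1" by linarith
  have "real a = real q * real (a div q) + real e" "real b = real q * real (b div q) + real e"
    using arg_cong[OF ea, of real] arg_cong[OF eb, of real] by simp_all
  then have "(real (b div q) - real (a div q)) * real q = real b - real a"
    by (simp add: algebra_simps)
  also have "\<dots> < hi - lo"
    using \<open>a \<in> S\<close> \<open>b \<in> S\<close> by (auto simp: S_def residue_window_def)
  finally have "real (b div q) - real (a div q) < (hi - lo) / q"
    using assms(1) by (simp add: pos_less_divide_eq)
  with card show ?thesis by (simp add: S_def)
qed

lemma finite_slice: "finite (slice A n a b)"
  unfolding slice_def by (rule finite_subset[OF _ finite_real_bounded_nat]) auto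

lemma finite_B2R: "finite (B2R A n)"
  unfolding B2R_def by (rule finite_subset[OF _ finite_real_bounded_nat[of "real n / 2"]]) auto

lemma propP_not_dvd:
  assumes "propP A" "x \<in> A" "y \<in> A" "z \<in> A" "z < x" "z < y"
  shows "\<not> z dvd x + y"
  using assms unfolding propP_def by blast

lemma B2_witness:
  assumes "b \<in> B2 A n"
  obtains a where "a \<in> A" "a \<le> b" "a dvd 2 * b"
proof -
  have "b \<in> (\<lambda>x. 3 * x) ` A \<union> (\<lambda>x. 2 * x) ` A \<union> (\<lambda>x. 3 * (x div 2)) ` {x \<in> A. even x} \<union> A"
    using assms unfolding B2_def slice_def by blast
  then show ?thesis
  proof (elim UnE imageE CollectE conjE)
    fix x assume "x \<in> A" "even x" "b = 3 * (x div 2)"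
    then show ?thesis by (intro that[of x]) (auto elim!: evenE)
  qed (auto intro: that)
qed

lemma B2_subset: "B2 A n \<subseteq> B2R A n \<union> {x \<in> slice A n (1/4) (1/3). odd x}"
  unfolding B2R_def B2_def slice_def by (auto elim!: evenE)

lemma top_sum_ne_four_B2R:
  assumes "propP A" "b \<in> B2R A n" "c \<in> slice A n (2/3) 1" "c' \<in> slice A n (2/3) 1"
  shows "c + c' \<noteq> 4 * b"
proof
  assume sum: "c + c' = 4 * b"
  have "b \<in> B2 A n" and "real b \<le> real n / 2" using assms(2) by (auto simp: B2R_def)
  from \<open>b \<in> B2 A n\<close> obtain a where a: "a \<in> A" "a \<le> b" "a dvd 2 * b" by (rule B2_witness)
  have "a < c" "a < c'" using a(2) \<open>real b \<le> real n / 2\<close> assms(3,4)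
    by (auto simp: slice_def)
  moreover have "a dvd 2 * (2 * b)" using a(3) by (rule dvd_mult)
  then have "a dvd c + c'" using sum by simp
  ultimately show False using propP_not_dvd assms(1,3,4) a(1) by (auto simp: slice_def)
qed

lemma top_sum_ne_six_slice:
  assumes "propP A" "z \<in> slice A n (1/4) (1/3)" "c \<in> slice A n (2/3) 1" "c' \<in> slice A n (2/3) 1"
  shows "c + c' \<noteq> 6 * z"
proof
  assume "c + c' = 6 * z"
  then have "z dvd c + c'" by simp
  moreover have "z < c" "z < c'" using assms(2-4) by (auto simp: slice_def)
  ultimately show False using propP_not_dvd assms by (auto simp: slice_def)
qed

lemma card_filter_partition:
  assumes "finite A"
  shows "card A = card {x \<in> A. P x} + card {x \<in> A. \<not> P x}"
proof -
  have "card ({x \<in> A. P x} \<union> {x \<in> A. \<not> P x}) = card {x \<in> A. P x} + card {x \<in> A. \<not> P x}"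
    using assms by (intro card_Un_disjoint) auto
  moreover have "{x \<in> A. P x} \<union> {x \<in> A. \<not> P x} = A" by blast
  ultimately show ?thesis by simp
qed

lemma card_sumset_ge:
  fixes P Q :: "nat set"
  assumes "finite P" "finite Q" "P \<noteq> {}" "Q \<noteq> {}"
  shows "card P + card Q \<le> card {p + q |p q. p \<in> P \<and> q \<in> Q} + 1"
proof -
  define m where "m = Min P"
  define M where "M = Max Q"
  have "m \<in> P" "M \<in> Q" using assms by (simp_all add: m_def M_def)
  define U where "U = (\<lambda>q. m + q) ` Q"
  define V where "V = (\<lambda>p. p + M) ` P"
  have "card U = card Q" "card V = card P"
    unfolding U_def V_def by (simp_all add: card_image)
  have "U \<inter> V \<subseteq> {m + M}"
  proof
    fix x assume "x \<in> U \<inter> V"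
    then obtain p q where "p \<in> P" "q \<in> Q" "x = m + q" "x = p + M" by (auto simp: U_def V_def)
    moreover have "m \<le> p" "q \<le> M" using assms \<open>p \<in> P\<close> \<open>q \<in> Q\<close> by (simp_all add: m_def M_def)
    ultimately have "x = m + M" by linarith
    then show "x \<in> {m + M}" by simp
  qed
  then have "card (U \<inter> V) \<le> 1" using card_mono[of "{m + M}" "U \<inter> V"] by simp
  moreover have "U \<union> V \<subseteq> {p + q |p q. p \<in> P \<and> q \<in> Q}"
    using \<open>m \<in> P\<close> \<open>M \<in> Q\<close> by (auto simp: U_def V_def)
  then have "card (U \<union> V) \<le> card {p + q |p q. p \<in> P \<and> q \<in> Q}"
    using assms by (intro card_mono finite_image_set2) auto
  moreover have "finite U" "finite V" using assms by (simp_all add: U_def V_def)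
  then have "card U + card V = card (U \<union> V) + card (U \<inter> V)" by (rule card_Un_Int)
  ultimately show ?thesis using \<open>card U = card Q\<close> \<open>card V = card P\<close> by linarith
qed

lemma card_B2R_plus_top_sums_le:
  assumes "propP A"
    and sums: "T \<subseteq> {c + c' |c c'. c \<in> slice A n (2/3) 1 \<and> c' \<in> slice A n (2/3) 1}"
    and mod4: "\<forall>s\<in>T. s mod 4 = 0"
  shows "card (B2R A n) + card T \<le> card (residue_window (2/3 * real n) (real n) 2 0)"
proof -
  let ?R = "B2R A n" and ?E = "residue_window (2/3 * real n) (real n) 2 0"
  define D where "D = (\<lambda>b. 2 * b) ` ?R"
  define H where "H = (\<lambda>s. s div 2) ` T"
  have "finite T"
    using sums by (rule finite_subset) (intro finite_image_set2; simp add: finite_slice)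
  have DE: "D \<subseteq> ?E" by (auto simp: D_def B2R_def residue_window_def)
  have HE: "H \<subseteq> ?E"
  proof
    fix h assume "h \<in> H"
    then obtain s c c' where "s \<in> T" "h = s div 2" "s = c + c'"
      and c: "c \<in> slice A n (2/3) 1" "c' \<in> slice A n (2/3) 1" using sums by (auto simp: H_def)
    moreover obtain k where "s = 4 * k" using mod4 \<open>s \<in> T\<close> by (metis mod_eq_0_iff_dvd dvdE)
    ultimately have "h = 2 * k" "real c + real c' = 4 * real k"
      by (simp, metis of_nat_add of_nat_mult of_nat_numeral)
    then have "real h = (real c + real c') / 2" "h mod 2 = 0" by simp_all
    then show "h \<in> ?E" using c by (auto simp: residue_window_def slice_def)
  qed
  have "D \<inter> H = {}"
  proof (rule ccontr)
    assume "D \<inter> H \<noteq> {}"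
    then obtain b s where "b \<in> ?R" "s \<in> T" "2 * b = s div 2" by (auto simp: D_def H_def)
    moreover obtain c c' where "s = c + c'" and c: "c \<in> slice A n (2/3) 1" "c' \<in> slice A n (2/3) 1"
      using sums \<open>s \<in> T\<close> by blast
    moreover obtain k where "s = 4 * k" using mod4 \<open>s \<in> T\<close> by (metis mod_eq_0_iff_dvd dvdE)
    ultimately have "c + c' = 4 * b" by presburger
    then show False using top_sum_ne_four_B2R[OF assms(1)] \<open>b \<in> ?R\<close> c by blast
  qed
  then have "card D + card H = card (D \<union> H)"
    using finite_B2R \<open>finite T\<close> by (simp add: D_def H_def card_Un_disjoint)
  also have "\<dots> \<le> card ?E" using DE HE by (intro card_mono finite_residue_window) simp
  finally have "card D + card H \<le> card ?E" .
  moreover have "card D = card ?R" by (auto simp: D_def card_image inj_on_def)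
  moreover have "inj_on (\<lambda>s. s div 2) T"
  proof (rule inj_onI)
    fix s t assume "s \<in> T" "t \<in> T" "s div 2 = t div 2"
    moreover have "s mod 4 = 0" "t mod 4 = 0" using mod4 \<open>s \<in> T\<close> \<open>t \<in> T\<close> by auto
    ultimately show "s = t" by presburger
  qed
  then have "card H = card T" by (simp add: H_def card_image)
  ultimately show ?thesis by simp
qed

lemma odd_residue_injection:
  fixes L C :: "nat set"
  assumes avoid: "\<forall>z\<in>L. odd z \<and> 3 * z \<notin> C \<and> (3 * z - 2 \<notin> C \<or> 3 * z + 2 \<notin> C)"
    and e: "e = 1 \<or> e = 3"
  obtains g where "inj_on g L"
    and "\<And>z. z \<in> L \<Longrightarrow> g z mod 4 = e \<and> g z \<notin> C \<and> 3 * z \<le> g z + 2 \<and> g z \<le> 3 * z + 2"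
proof -
  have "\<exists>w. w mod 4 = e \<and> w \<notin> C \<and> 3 * z \<le> w + 2 \<and> w \<le> 3 * z + 2" if "z \<in> L" for z
  proof (cases "(3 * z) mod 4 = e")
    case True
    then show ?thesis using avoid that by (intro exI[of _ "3 * z"]) auto
  next
    case False
    have "odd z" and avoid_z: "3 * z - 2 \<notin> C \<or> 3 * z + 2 \<notin> C" using avoid that by blast+
    then have "2 \<le> 3 * z" by (auto elim!: oddE)
    \<comment> \<open>3z is odd, so if it misses the class e then both neighbours 3z \<plusminus> 2 lie in it\<close>
    have "(3 * z + 2) mod 4 = e" using \<open>odd z\<close> e False by presburger
    moreover have "3 * z + 2 = (3 * z - 2) + 4" using \<open>2 \<le> 3 * z\<close> by simp
    then have "(3 * z - 2) mod 4 = (3 * z + 2) mod 4" by (metis mod_add_self2)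
    ultimately have mods: "(3 * z - 2) mod 4 = e" "(3 * z + 2) mod 4 = e" by simp_all
    from avoid_z show ?thesis
    proof
      assume "3 * z - 2 \<notin> C"
      then show ?thesis using mods \<open>2 \<le> 3 * z\<close> by (intro exI[of _ "3 * z - 2"]) auto
    next
      assume "3 * z + 2 \<notin> C"
      then show ?thesis using mods by (intro exI[of _ "3 * z + 2"]) auto
    qed
  qed
  then obtain g where g: "\<And>z. z \<in> L \<Longrightarrow> g z mod 4 = e \<and> g z \<notin> C \<and> 3 * z \<le> g z + 2 \<and> g z \<le> 3 * z + 2"
    by metis
  have "inj_on g L"
  proof (rule inj_onI)
    fix z z' assume "z \<in> L" "z' \<in> L" "g z = g z'"
    then have "z = z' \<or> z = Suc z' \<or> z' = Suc z" using g[of z] g[of z'] by linarith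
    moreover have "odd z" "odd z'" using avoid \<open>z \<in> L\<close> \<open>z' \<in> L\<close> by blast+
    ultimately show "z = z'" by auto
  qed
  with g show ?thesis using that by blast
qed

lemma card_B2R_plus_even_top_le:
  assumes "propP A"
  shows "card (B2R A n) + card {c \<in> slice A n (2/3) 1. even c}
    \<le> card (residue_window (2/3 * real n) (real n) 2 0)"
proof -
  let ?C0 = "{c \<in> slice A n (2/3) 1. even c}"
  have "card ((\<lambda>c. c + c) ` ?C0) = card ?C0" by (auto simp: card_image inj_on_def)
  moreover have "card (B2R A n) + card ((\<lambda>c. c + c) ` ?C0)
      \<le> card (residue_window (2/3 * real n) (real n) 2 0)"
    by (rule card_B2R_plus_top_sums_le[OF assms]) (auto elim!: evenE)
  ultimately show ?thesis by simp
qed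

lemma B2R_top_bound_of_both_residues:
  assumes "propP A"
    and "p \<in> slice A n (2/3) 1" "p mod 4 = 1" "q \<in> slice A n (2/3) 1" "q mod 4 = 3"
  shows "2 * card (B2R A n) + card (slice A n (2/3) 1)
    \<le> 2 * card (residue_window (2/3 * real n) (real n) 2 0) + 1"
proof -
  let ?C = "slice A n (2/3) 1" and ?E = "residue_window (2/3 * real n) (real n) 2 0"
  define P where "P = {c \<in> ?C. c mod 4 = 1}"
  define Q where "Q = {c \<in> ?C. c mod 4 = 3}"
  have "card ?C = card {c \<in> ?C. even c} + card {c \<in> ?C. odd c}"
    by (rule card_filter_partition[OF finite_slice])
  moreover have "card {c \<in> ?C. odd c} = card P + card Q"
  proof -
    have P: "{c \<in> {c \<in> ?C. odd c}. c mod 4 = 1} = P" and Q: "{c \<in> {c \<in> ?C. odd c}. c mod 4 \<noteq> 1} = Q"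
      unfolding P_def Q_def by (auto, presburger+)
    have "card {c \<in> ?C. odd c}
        = card {c \<in> {c \<in> ?C. odd c}. c mod 4 = 1} + card {c \<in> {c \<in> ?C. odd c}. c mod 4 \<noteq> 1}"
      by (rule card_filter_partition) (simp add: finite_slice)
    then show ?thesis by (simp only: P Q)
  qed
  moreover have "card P + card Q \<le> card {x + y |x y. x \<in> P \<and> y \<in> Q} + 1"
    using assms(2-5) finite_slice by (intro card_sumset_ge) (auto simp: P_def Q_def)
  moreover have "card (B2R A n) + card {x + y |x y. x \<in> P \<and> y \<in> Q} \<le> card ?E"
    using assms(1) by (rule card_B2R_plus_top_sums_le) (auto simp: P_def Q_def, presburger)
  ultimately show ?thesis using card_B2R_plus_even_top_le[OF assms(1), of n] by linarith
qed

lemma B2_top_bound_of_one_residue: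
  assumes "propP A" and e: "e = 1 \<or> e = 3"
    and one: "\<forall>c\<in>slice A n (2/3) 1. odd c \<longrightarrow> c mod 4 = e"
  shows "card {z \<in> slice A n (1/4) (1/3). odd z} + card {c \<in> slice A n (2/3) 1. odd c}
    \<le> card (residue_window (2/3 * real n - 2) (real n + 2) 4 e)"
proof -
  let ?C = "slice A n (2/3) 1" and ?L = "{z \<in> slice A n (1/4) (1/3). odd z}"
    and ?S = "residue_window (2/3 * real n - 2) (real n + 2) 4 e"
  have "\<forall>z\<in>?L. odd z \<and> 3 * z \<notin> ?C \<and> (3 * z - 2 \<notin> ?C \<or> 3 * z + 2 \<notin> ?C)"
  proof (intro ballI conjI)
    fix z assume z: "z \<in> ?L"
    then show "odd z" by simp
    show "3 * z \<notin> ?C" using top_sum_ne_six_slice[OF assms(1), of z n "3 * z" "3 * z"] z by auto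
    have "(3 * z - 2) + (3 * z + 2) = 6 * z" using z by (auto elim!: oddE)
    moreover have "z \<in> slice A n (1/4) (1/3)" using z by simp
    ultimately show "3 * z - 2 \<notin> ?C \<or> 3 * z + 2 \<notin> ?C"
      using top_sum_ne_six_slice[OF assms(1), of z n "3 * z - 2" "3 * z + 2"] by blast
  qed
  then obtain g where "inj_on g ?L"
    and g: "\<And>z. z \<in> ?L \<Longrightarrow> g z mod 4 = e \<and> g z \<notin> ?C \<and> 3 * z \<le> g z + 2 \<and> g z \<le> 3 * z + 2"
    using e by (rule odd_residue_injection; blast)
  have gS: "g ` ?L \<subseteq> ?S"
  proof
    fix w assume "w \<in> g ` ?L"
    then obtain z where z: "z \<in> ?L" "w = g z" by blast
    then have "real n / 4 < real z" "real z \<le> real n / 3" "3 * real z \<le> real w + 2" "real w \<le> 3 * real z + 2"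
      using g[OF z(1)] by (auto simp: slice_def)
    then show "w \<in> ?S" using g[OF z(1)] z(2) by (auto simp: residue_window_def)
  qed
  have CS: "{c \<in> ?C. odd c} \<subseteq> ?S" using one by (auto simp: residue_window_def slice_def)
  have "g ` ?L \<inter> {c \<in> ?C. odd c} = {}" using g by auto
  then have "card (g ` ?L) + card {c \<in> ?C. odd c} = card (g ` ?L \<union> {c \<in> ?C. odd c})"
    using finite_slice by (simp add: card_Un_disjoint)
  also have "\<dots> \<le> card ?S" using gS CS by (intro card_mono finite_residue_window) auto
  finally show ?thesis using \<open>inj_on g ?L\<close> by (simp add: card_image)
qed

theorem mainTheorem14:
  fixes n :: nat and A :: "nat set"
  assumes "A \<subseteq> {1..n}" and "propP A"
  shows "2 * real (card (B2R A n)) + real (card (slice A n (2/3) 1)) \<le> real n / 3 + 4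
       \<or> real (card (B2 A n)) + real (card (slice A n (2/3) 1)) \<le> real n / 4 + 4"
proof -
  let ?C = "slice A n (2/3) 1" and ?L = "{z \<in> slice A n (1/4) (1/3). odd z}"
    and ?E = "residue_window (2/3 * real n) (real n) 2 0"
  have E: "real (card ?E) \<le> real n / 6 + 1"
    using card_residue_window_le[of 2 "2/3 * real n" "real n" 0] by simp
  consider (both) p q where "p \<in> ?C" "p mod 4 = 1" "q \<in> ?C" "q mod 4 = 3"
    | (one) e where "e = 1 \<or> e = 3" "\<forall>c\<in>?C. odd c \<longrightarrow> c mod 4 = e"
  proof (cases "(\<exists>p\<in>?C. p mod 4 = 1) \<and> (\<exists>q\<in>?C. q mod 4 = 3)")
    case False
    have "odd c \<longleftrightarrow> c mod 4 = 1 \<or> c mod 4 = 3" for c :: nat by presburger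
    with False that(2)[of 1] that(2)[of 3] show ?thesis by blast
  qed (use that(1) in blast)
  then show ?thesis
  proof cases
    case both
    then have "2 * card (B2R A n) + card ?C \<le> 2 * card ?E + 1"
      using B2R_top_bound_of_both_residues[OF assms(2)] by blast
    then show ?thesis using E by linarith
  next
    case one
    let ?S = "residue_window (2/3 * real n - 2) (real n + 2) 4 e"
    have "real (card ?S) \<le> ((real n + 2) - (2/3 * real n - 2)) / 4 + 1"
      using card_residue_window_le[of 4 "2/3 * real n - 2" "real n + 2" e] by simp
    also have "\<dots> = real n / 12 + 2" by simp
    finally have "real (card ?S) \<le> real n / 12 + 2" .
    moreover have "card (B2 A n) \<le> card (B2R A n \<union> ?L)"
      by (rule card_mono[OF _ B2_subset]) (simp add: finite_B2R finite_slice)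
    then have "card (B2 A n) \<le> card (B2R A n) + card ?L"
      using card_Un_le order_trans by blast
    ultimately show ?thesis
      using B2_top_bound_of_one_residue[OF assms(2) one] card_B2R_plus_even_top_le[OF assms(2), of n]
        card_filter_partition[OF finite_slice[of A n "2/3" 1], of even] E by linarith
  qed
qed

end
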